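(* Let $(u,g,r)$ be a symmetric RUM-CF and let $(p,f)$ be an SCF-RT generated by it, i.e. rationalized by $(u,g,r)$. Then for any $(x,y)\in D$, with $q=p(x,y)/p(y,x)$: if $u(x)\geq u(y)$ then $F(y,x)$ $q$-FSD $F(x,y)$, and if $u(x)>u(y)$ then $F(y,x)$ $q$-SFSD $F(x,y)$.
   Context: $X$ is a finite set of options; $C=\{(x,y): x,y\in X,\ x\neq y\}$; $D\subseteq C$ is a fixed non-empty set with $(x,y)\in D\Rightarrow (y,x)\in D$. An SCF $p$ assigns to each $(x,y)\in D$ a number $p(x,y)>0$ with $p(x,y)+p(y,x)=1$. An SCF-RT is a pair $(p,f)$ where $p$ is an SCF and $f$ assigns to each $(x,y)\in D$ a strictly positive density $f(x,y)$ on $\mathbb{R}^+$ with cdf $F(x,y)$. A RUM is a pair $(u,g)$ with $u:X\to\mathbb{R}$ and $g$ assigning to each $(x,y)\in C$ a density $g(x,y)$ on $\mathbb{R}$ (cdf $G(x,y)$) with $\int v\,g(x,y)(v)\,dv=u(x)-u(y)=:v(x,y)$, $g(x,y)(v)=g(y,x)(-v)$ for all $v$, and connected support. A RUM-CF is $(u,g,r)$ with $(u,g)$ a RUM and $r:\mathbb{R}^{++}\to\mathbb{R}^+$ continuous, strictly decreasing where $r(v)>0$, $\lim_{v\to0}r(v)=\infty$, $\lim_{v\to\infty}r(v)=0$; $r^{-1}(t)$ ($t>0$) is the inverse of $r$ restricted to $\{r>0\}$. It rationalizes $(p,f)$ if for all $(x,y)\in D$: $G(x,y)(0)=p(y,x)$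 and $\frac{1-G(x,y)(r^{-1}(t))}{1-G(x,y)(0)}=F(x,y)(t)$ for all $t>0$. It is symmetric if $g(x,y)(v(x,y)+\delta)=g(x,y)(v(x,y)-\delta)$ for all $(x,y)\in C$, $\delta\geq0$. For cdfs $G,H$ on $\mathbb{R}^+$ and $q>0$, $G$ $q$-FSD $H$ means $G(t)\leq qH(t)$ for all $t\geq0$; $q$-SFSD means additionally strict inequality for some $t$. *)

theory Defs
  imports "HOL-Analysis.Analysis"
begin

definition pos_density :: "(real \<Rightarrow> real) \<Rightarrow> bool" where
  "pos_density h \<longleftrightarrow> (\<forall>t\<ge>0. 0 < h t) \<and> (h has_integral 1) {0..}"

definition cdf_pos :: "(real \<Rightarrow> real) \<Rightarrow> real \<Rightarrow> real" where
  "cdf_pos h t = integral {0..t} h"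

definition real_density :: "(real \<Rightarrow> real) \<Rightarrow> bool" where
  "real_density g \<longleftrightarrow> (\<forall>v. 0 \<le> g v) \<and> (g has_integral 1) UNIV"

definition cdf_real :: "(real \<Rightarrow> real) \<Rightarrow> real \<Rightarrow> real" where
  "cdf_real g v = integral {..v} g"

definition is_SCF :: "('a \<times> 'a) set \<Rightarrow> ('a \<Rightarrow> 'a \<Rightarrow> real) \<Rightarrow> bool" where
  "is_SCF D p \<longleftrightarrow> (\<forall>(x,y)\<in>D. 0 < p x y \<and> p x y + p y x = 1)"

definition is_SCF_RT ::
  "('a \<times> 'a) set \<Rightarrow> ('a \<Rightarrow> 'a \<Rightarrow> real) \<Rightarrow> ('a \<Rightarrow> 'a \<Rightarrow> real \<Rightarrow> real) \<Rightarrow> bool" where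
  "is_SCF_RT D p f \<longleftrightarrow> is_SCF D p \<and> (\<forall>(x,y)\<in>D. pos_density (f x y))"

definition is_RUM :: "('a \<Rightarrow> real) \<Rightarrow> ('a \<Rightarrow> 'a \<Rightarrow> real \<Rightarrow> real) \<Rightarrow> bool" where
  "is_RUM u g \<longleftrightarrow> (\<forall>x y. x \<noteq> y \<longrightarrow>
      real_density (g x y)
    \<and> (\<lambda>v. v * g x y v) absolutely_integrable_on UNIV
    \<and> integral UNIV (\<lambda>v. v * g x y v) = u x - u y
    \<and> (\<forall>v. g x y v = g y x (- v))
    \<and> connected {v. 0 < g x y v})"

definition is_CF :: "(real \<Rightarrow> real) \<Rightarrow> bool" where
  "is_CF r \<longleftrightarrow> continuous_on {0<..} r
    \<and> (\<forall>v>0. 0 \<le> r v)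
    \<and> (\<forall>v w. 0 < v \<longrightarrow> v < w \<longrightarrow> 0 < r v \<longrightarrow> 0 < r w \<longrightarrow> r w < r v)
    \<and> filterlim r at_top (at_right 0)
    \<and> (r \<longlongrightarrow> 0) at_top"

definition rinv :: "(real \<Rightarrow> real) \<Rightarrow> real \<Rightarrow> real" where
  "rinv r t = (THE v. 0 < v \<and> 0 < r v \<and> r v = t)"

definition is_RUM_CF ::
  "('a \<Rightarrow> real) \<Rightarrow> ('a \<Rightarrow> 'a \<Rightarrow> real \<Rightarrow> real) \<Rightarrow> (real \<Rightarrow> real) \<Rightarrow> bool" where
  "is_RUM_CF u g r \<longleftrightarrow> is_RUM u g \<and> is_CF r"

definition rationalizes ::
  "('a \<Rightarrow> real) \<Rightarrow> ('a \<Rightarrow> 'a \<Rightarrow> real \<Rightarrow> real) \<Rightarrow> (real \<Rightarrow> real) \<Rightarrow>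
   ('a \<times> 'a) set \<Rightarrow> ('a \<Rightarrow> 'a \<Rightarrow> real) \<Rightarrow> ('a \<Rightarrow> 'a \<Rightarrow> real \<Rightarrow> real) \<Rightarrow> bool" where
  "rationalizes u g r D p f \<longleftrightarrow> (\<forall>(x,y)\<in>D.
      cdf_real (g x y) 0 = p y x
    \<and> (\<forall>t>0. (1 - cdf_real (g x y) (rinv r t)) / (1 - cdf_real (g x y) 0)
              = cdf_pos (f x y) t))"

definition symmetric_RUM_CF :: "('a \<Rightarrow> real) \<Rightarrow> ('a \<Rightarrow> 'a \<Rightarrow> real \<Rightarrow> real) \<Rightarrow> bool" where
  "symmetric_RUM_CF u g \<longleftrightarrow> (\<forall>x y. x \<noteq> y \<longrightarrow>
      (\<forall>\<delta>\<ge>0. g x y (u x - u y + \<delta>) = g x y (u x - u y - \<delta>)))"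

definition q_FSD :: "(real \<Rightarrow> real) \<Rightarrow> real \<Rightarrow> (real \<Rightarrow> real) \<Rightarrow> bool" where
  "q_FSD G q H \<longleftrightarrow> (\<forall>t\<ge>0. G t \<le> q * H t)"

definition q_SFSD :: "(real \<Rightarrow> real) \<Rightarrow> real \<Rightarrow> (real \<Rightarrow> real) \<Rightarrow> bool" where
  "q_SFSD G q H \<longleftrightarrow> q_FSD G q H \<and> (\<exists>t\<ge>0. G t < q * H t)"

end

theory Submission
  imports Defs
begin

text \<open>Let \<open>h = g(x,y)\<close> and \<open>c = u(x) - u(y)\<close>. Since \<open>g(y,x)(v) = h(-v)\<close> and \<open>h\<close> is
  symmetric about \<open>c\<close>, \<open>g(y,x)\<close> is \<open>h\<close> shifted by \<open>2c\<close>. So for \<open>t > 0\<close> and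
  \<open>s = r\<^sup>-\<^sup>1(t)\<close>, both \<open>q F(x,y)(t)\<close> and \<open>F(y,x)(t)\<close> are tails of \<open>h\<close> divided by
  \<open>p(y,x)\<close>: beyond \<open>s\<close> and beyond \<open>s + 2c\<close> respectively. For \<open>c \<ge> 0\<close> the second
  tail is the smaller one. For \<open>c > 0\<close> it is strictly smaller as soon as \<open>h\<close> has
  positive mass on \<open>(s, s + 2c]\<close>; this holds for small \<open>s\<close>, because the support of
  \<open>h\<close> is an interval of positive measure symmetric about \<open>c\<close>, hence contains a
  neighbourhood of \<open>c\<close>.\<close>

lemma real_density_absolutely_integrable_on:
  assumes "real_density h" "S \<in> sets lebesgue"
  shows "h absolutely_integrable_on S"
proof -
  have "h absolutely_integrable_on UNIV"
    using assms(1) unfolding real_density_def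
    by (intro nonnegative_absolutely_integrable_1) auto
  then show ?thesis using assms(2) by (rule set_integrable_subset) auto
qed

lemma real_density_integrable_on:
  assumes "real_density h" "S \<in> sets lebesgue"
  shows "h integrable_on S"
  using real_density_absolutely_integrable_on[OF assms] set_lebesgue_integral_eq_integral(1) by blast

lemma real_density_integral_Un:
  assumes "real_density h" "S \<in> sets lebesgue" "T \<in> sets lebesgue" "S \<inter> T = {}"
  shows "integral (S \<union> T) h = integral S h + integral T h"
  using assms by (intro integral_Un real_density_integrable_on) auto

lemma cdf_real_eq_1_minus_tail:
  assumes "real_density h"
  shows "cdf_real h a = 1 - integral {a<..} h"
proof -
  have "{..a} \<union> {a<..} = UNIV" "{..a} \<inter> {a<..} = {}" by auto
  then have "integral UNIV h = integral {..a} h + integral {a<..} h"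
    using real_density_integral_Un[OF assms, of "{..a}" "{a<..}"] by simp
  moreover have "integral UNIV h = 1"
    using assms unfolding real_density_def by (blast intro: integral_unique)
  ultimately show ?thesis unfolding cdf_real_def by simp
qed

lemma real_density_tail_split:
  assumes "real_density h" "a \<le> b"
  shows "integral {a<..} h = integral {a<..b} h + integral {b<..} h"
proof -
  have "{a<..} = {a<..b} \<union> {b<..}" "{a<..b} \<inter> {b<..} = {}" using assms(2) by auto
  then show ?thesis using real_density_integral_Un[OF assms(1), of "{a<..b}" "{b<..}"] by simp
qed

lemma real_density_tail_antimono:
  assumes h: "real_density h" and "a \<le> b"
  shows "integral {b<..} h \<le> integral {a<..} h"
proof -
  have "0 \<le> integral {a<..b} h"
    using h unfolding real_density_def by (intro integral_nonneg real_density_integrable_on[OF h]) auto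
  then show ?thesis using real_density_tail_split[OF assms] by simp
qed

lemma real_density_integral_pos:
  assumes h: "real_density h" and S: "S \<in> sets lebesgue" "\<not> negligible S"
    and pos: "\<And>x. x \<in> S \<Longrightarrow> 0 < h x"
  shows "0 < integral S h"
proof -
  have int: "integrable lebesgue h"
    using real_density_absolutely_integrable_on[OF h, of UNIV] by (simp add: set_integrable_def)
  have "0 \<le> integral S h"
    using pos by (intro integral_nonneg real_density_integrable_on[OF h S(1)]) (auto intro: less_imp_le)
  moreover have "integral S h \<noteq> 0"
  proof
    assume "integral S h = 0"
    then have "(LINT x:S|lebesgue. h x) = 0"
      using real_density_absolutely_integrable_on[OF h S(1)] by (simp add: set_lebesgue_integral_eq_integral)
    then have "S \<in> null_sets lebesgue"
      using pos by (intro null_if_pos_func_has_zero_int[OF int S(1)]) auto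
    then show False using S(2) by (simp add: negligible_iff_null_sets S(1))
  qed
  ultimately show ?thesis by simp
qed

lemma real_density_support_not_negligible:
  assumes "real_density h"
  shows "\<not> negligible {v. 0 < h v}"
proof
  assume "negligible {v. 0 < h v}"
  moreover have "h v = 0" if "v \<in> UNIV - {v. 0 < h v}" for v
    using assms that unfolding real_density_def by (auto simp: le_less)
  ultimately have "(h has_integral 0) UNIV"
    using has_integral_0 by (rule has_integral_spike)
  then show False
    using assms unfolding real_density_def by (metis has_integral_unique zero_neq_one)
qed

lemma integral_tail_shift:
  assumes "real_density h"
  shows "integral {s<..} (\<lambda>w. h (c + w)) = integral {c + s<..} h"
proof -
  have img: "(+) c ` {s<..} = {c + s<..}"
    by (auto simp: image_iff intro!: bexI[where x="_ - c"])
  have "h absolutely_integrable_on (+) c ` {s<..}"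
    unfolding img by (rule real_density_absolutely_integrable_on[OF assms]) auto
  moreover have "(\<lambda>x. \<bar>1::real\<bar> *\<^sub>R h (c + x)) absolutely_integrable_on {s<..} \<and>
        integral {s<..} (\<lambda>x. \<bar>1::real\<bar> *\<^sub>R h (c + x)) = integral ((+) c ` {s<..}) h
    \<longleftrightarrow> h absolutely_integrable_on (+) c ` {s<..} \<and> integral ((+) c ` {s<..}) h = integral ((+) c ` {s<..}) h"
    by (rule has_absolute_integral_change_of_variables_real)
      (auto intro!: derivative_eq_intros simp: inj_on_def)
  ultimately show ?thesis using img by simp
qed

lemma real_density_tail_strict_antimono:
  assumes h: "real_density h" and "a \<le> b" "c < d" "{c..d} \<subseteq> {a<..b}"
    and pos: "\<And>z. z \<in> {c..d} \<Longrightarrow> 0 < h z"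
  shows "integral {b<..} h < integral {a<..} h"
proof -
  have "0 < integral {c..d} h"
    using assms(3) pos negligible_interval(1)[of c d]
    by (intro real_density_integral_pos[OF h]) (auto simp: box_real)
  also have "\<dots> \<le> integral {a<..b} h"
    using h assms(4) unfolding real_density_def
    by (intro integral_subset_le real_density_integrable_on[OF h]) auto
  finally show ?thesis using real_density_tail_split[OF h assms(2)] by simp
qed

lemma reflect_of_symmetric_about:
  fixes h :: "real \<Rightarrow> 'b"
  assumes "\<forall>\<delta>\<ge>0. h (c + \<delta>) = h (c - \<delta>)"
  shows "h (2 * c - w) = h w"
proof (cases "c \<le> w")
  case True
  then show ?thesis using assms[rule_format, of "w - c"] by (simp add: algebra_simps)
next
  case False
  then show ?thesis using assms[rule_format, of "c - w"] by (simp add: algebra_simps)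
qed

lemma symmetric_density_pos_near_center:
  assumes h: "real_density h" and conn: "connected {v. 0 < h v}"
    and refl: "\<And>w. h (2 * c - w) = h w"
  obtains \<eta> where "0 < \<eta>" "\<And>z. z \<in> {c - \<eta>..c + \<eta>} \<Longrightarrow> 0 < h z"
proof -
  have "\<not> {v. 0 < h v} \<subseteq> {c}"
    using real_density_support_not_negligible[OF h] negligible_subset by blast
  then obtain w where w: "0 < h w" "w \<noteq> c" by auto
  define \<eta> where "\<eta> = \<bar>w - c\<bar>"
  have "0 < h (c - \<eta>) \<and> 0 < h (c + \<eta>)"
  proof (cases "w < c")
    case True
    then have "c - \<eta> = w" "c + \<eta> = 2 * c - w" by (auto simp: \<eta>_def)
    then show ?thesis using w refl[of w] by metis
  next
    case False
    then have "c + \<eta> = w" "c - \<eta> = 2 * c - w" by (auto simp: \<eta>_def)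
    then show ?thesis using w refl[of w] by metis
  qed
  then have "0 < h z" if "z \<in> {c - \<eta>..c + \<eta>}" for z
    using conn that unfolding connected_iff_interval atLeastAtMost_iff mem_Collect_eq by blast
  moreover have "0 < \<eta>" using w by (simp add: \<eta>_def)
  ultimately show ?thesis using that by blast
qed

lemma is_CF_pos_near_0:
  assumes "is_CF r" "0 < e"
  obtains s where "0 < s" "s < e" "0 < r s"
proof -
  have "\<forall>\<^sub>F s in at_right 0. 0 < r s"
    using assms(1) unfolding is_CF_def filterlim_at_top_dense by blast
  moreover have "\<forall>\<^sub>F s in at_right 0. 0 < s \<and> s < e"
    using assms(2) by (auto simp: eventually_at_right_field)
  ultimately have "\<forall>\<^sub>F s in at_right 0. 0 < s \<and> s < e \<and> 0 < r s"
    by eventually_elim auto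
  then show ?thesis using that eventually_happens'[OF trivial_limit_at_right_real] by blast
qed

lemma rinv_apply:
  assumes r: "is_CF r" and "0 < s" "0 < r s"
  shows "rinv r (r s) = s"
  unfolding rinv_def
proof (rule the_equality)
  show "0 < s \<and> 0 < r s \<and> r s = r s" using assms by simp
next
  fix v assume v: "0 < v \<and> 0 < r v \<and> r v = r s"
  have decr: "\<And>v w. 0 < v \<Longrightarrow> v < w \<Longrightarrow> 0 < r v \<Longrightarrow> 0 < r w \<Longrightarrow> r w < r v"
    using r unfolding is_CF_def by blast
  show "v = s"
    using decr[of v s] decr[of s v] v assms(2,3) by (cases v s rule: linorder_cases) auto
qed

lemma symmetric_density_tail_gap:
  assumes h: "real_density h" and conn: "connected {v. 0 < h v}"
    and refl: "\<And>w. h (2 * c - w) = h w" and "0 < c" and r: "is_CF r"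
  obtains s where "0 < s" "0 < r s" "integral {2 * c + s<..} h < integral {s<..} h"
proof -
  obtain \<eta> where \<eta>: "0 < \<eta>" "\<And>z. z \<in> {c - \<eta>..c + \<eta>} \<Longrightarrow> 0 < h z"
    using symmetric_density_pos_near_center[OF h conn refl] by blast
  define \<delta> where "\<delta> = min \<eta> (c / 2)"
  have \<delta>: "0 < \<delta>" "\<delta> < c" using \<eta>(1) \<open>0 < c\<close> by (auto simp: \<delta>_def)
  obtain s where s: "0 < s" "s < c - \<delta>" "0 < r s"
    using is_CF_pos_near_0[OF r] \<delta> by (metis diff_gt_0_iff_gt)
  have "integral {2 * c + s<..} h < integral {s<..} h"
  proof (rule real_density_tail_strict_antimono[OF h])
    show "{c - \<delta>..c + \<delta>} \<subseteq> {s<..2 * c + s}" using s \<delta> by auto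
    have "\<delta> \<le> \<eta>" by (simp add: \<delta>_def)
    then show "0 < h z" if "z \<in> {c - \<delta>..c + \<delta>}" for z
      using that by (intro \<eta>(2)) auto
  qed (use s \<delta> \<open>0 < c\<close> in auto)
  with s show ?thesis using that by blast
qed

lemma symmetric_RUM_CF_reflect:
  assumes "symmetric_RUM_CF u g" "x \<noteq> y"
  shows "g x y (2 * (u x - u y) - w) = g x y w"
  using assms unfolding symmetric_RUM_CF_def by (blast intro: reflect_of_symmetric_about)

lemma is_RUM_swap_eq_shift:
  assumes "is_RUM u g" "symmetric_RUM_CF u g" "x \<noteq> y"
  shows "g y x w = g x y (2 * (u x - u y) + w)"
proof -
  have "g y x w = g x y (- w)"
    using assms(1,3) unfolding is_RUM_def by metis
  also have "\<dots> = g x y (2 * (u x - u y) + w)"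
    using symmetric_RUM_CF_reflect[OF assms(2,3), of "- w"] by simp
  finally show ?thesis .
qed

lemma rationalizes_cdf_pos:
  assumes "rationalizes u g r D p f" "is_SCF D p" "(x, y) \<in> D" "real_density (g x y)" "0 < t"
  shows "cdf_pos (f x y) t = integral {rinv r t<..} (g x y) / p x y"
proof -
  have "cdf_real (g x y) 0 = p y x"
    and F: "(1 - cdf_real (g x y) (rinv r t)) / (1 - cdf_real (g x y) 0) = cdf_pos (f x y) t"
    using assms(1,3,5) unfolding rationalizes_def by auto
  moreover have "p x y + p y x = 1" using assms(2,3) unfolding is_SCF_def by auto
  ultimately have "1 - cdf_real (g x y) 0 = p x y" by linarith
  moreover have "1 - cdf_real (g x y) (rinv r t) = integral {rinv r t<..} (g x y)"
    using cdf_real_eq_1_minus_tail[OF assms(4)] by simp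
  ultimately show ?thesis using F by simp
qed

lemma q_FSD_cdf_pos_iff:
  "q_FSD (cdf_pos f) q (cdf_pos h) \<longleftrightarrow> (\<forall>t>0. cdf_pos f t \<le> q * cdf_pos h t)"
  unfolding q_FSD_def by (auto simp: cdf_pos_def le_less)

theorem proposition4:
  fixes D :: "('a::finite \<times> 'a) set"
    and p :: "'a \<Rightarrow> 'a \<Rightarrow> real"
    and f :: "'a \<Rightarrow> 'a \<Rightarrow> real \<Rightarrow> real"
    and u :: "'a \<Rightarrow> real"
    and g :: "'a \<Rightarrow> 'a \<Rightarrow> real \<Rightarrow> real"
    and r :: "real \<Rightarrow> real"
  assumes D_sub: "D \<subseteq> {(x, y). x \<noteq> y}"
    and D_ne: "D \<noteq> {}"
    and D_sym: "\<forall>(x, y)\<in>D. (y, x) \<in> D"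
    and SCFRT: "is_SCF_RT D p f"
    and RUMCF: "is_RUM_CF u g r"
    and symm: "symmetric_RUM_CF u g"
    and rat: "rationalizes u g r D p f"
    and xy: "(x, y) \<in> D"
  shows "(u x \<ge> u y \<longrightarrow> q_FSD (cdf_pos (f y x)) (p x y / p y x) (cdf_pos (f x y)))
       \<and> (u x > u y \<longrightarrow> q_SFSD (cdf_pos (f y x)) (p x y / p y x) (cdf_pos (f x y)))"
proof -
  have xy': "x \<noteq> y" "(y, x) \<in> D" using D_sub D_sym xy by auto
  have RUM: "is_RUM u g" and CF: "is_CF r" using RUMCF by (auto simp: is_RUM_CF_def)
  have SCF: "is_SCF D p" using SCFRT by (simp add: is_SCF_RT_def)
  define h c where "h = g x y" and "c = u x - u y"
  have h: "real_density h" "connected {v. 0 < h v}" and dens_yx: "real_density (g y x)"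
    using RUM xy'(1) unfolding is_RUM_def h_def by (metis, metis, metis)
  have refl: "h (2 * c - w) = h w" for w
    using symmetric_RUM_CF_reflect[OF symm xy'(1)] by (simp add: h_def c_def)
  have p: "0 < p x y" "0 < p y x" using SCF xy xy'(2) by (auto simp: is_SCF_def)
  have Fxy: "p x y / p y x * cdf_pos (f x y) t = integral {rinv r t<..} h / p y x" if "0 < t" for t
    using rationalizes_cdf_pos[OF rat SCF xy _ that] h(1) p by (simp add: h_def)
  have Fyx: "cdf_pos (f y x) t = integral {2 * c + rinv r t<..} h / p y x" if "0 < t" for t
    using rationalizes_cdf_pos[OF rat SCF xy'(2) dens_yx that] integral_tail_shift[OF h(1)]
      is_RUM_swap_eq_shift[OF RUM symm xy'(1)] by (simp add: h_def c_def)
  \<comment> \<open>\<open>rinv r t\<close> is a junk value when \<open>t\<close> is not a value of \<open>r\<close>; harmless here, as the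
    tails compare at every point.\<close>
  have FSD: "q_FSD (cdf_pos (f y x)) (p x y / p y x) (cdf_pos (f x y))" if "0 \<le> c"
    unfolding q_FSD_cdf_pos_iff
    using Fxy Fyx real_density_tail_antimono[OF h(1)] that p by (simp add: divide_right_mono)
  show ?thesis
  proof (intro conjI impI)
    show "q_FSD (cdf_pos (f y x)) (p x y / p y x) (cdf_pos (f x y))" if "u y \<le> u x"
      using FSD that by (simp add: c_def)
    assume "u y < u x"
    then have "0 < c" by (simp add: c_def)
    then obtain s where s: "0 < s" "0 < r s" "integral {2 * c + s<..} h < integral {s<..} h"
      using symmetric_density_tail_gap[OF h refl _ CF] by blast
    then have "cdf_pos (f y x) (r s) < p x y / p y x * cdf_pos (f x y) (r s)"
      using Fxy Fyx rinv_apply[OF CF] p by (simp add: divide_strict_right_mono)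
    then show "q_SFSD (cdf_pos (f y x)) (p x y / p y x) (cdf_pos (f x y))"
      using FSD \<open>0 < c\<close> s(2) unfolding q_SFSD_def by (auto intro: less_imp_le)
  qed
qed

end
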